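(* Let $M$ be a finite monoid and let $J$ and $J'$ be two $\mathscr{J}$-classes of $M$ such that $A(J)=A(J')$. Then the relation $\theta_J\cup\theta_{J'}$ is a congruence of $M$.
   Context: Green's relations on $M$: $a\mathscr{H}b$ iff $Ma=Mb$ and $aM=bM$; $a\mathscr{J}b$ iff $MaM=MbM$. $J_a$ is the $\mathscr{J}$-class of $a$; $J_a\leqslant_{\mathscr{J}}J_b$ iff $MaM\subseteq MbM$, and $J_a<_{\mathscr{J}}J_b$ iff $J_a\leqslant_{\mathscr{J}}J_b$ and $J_a\neq J_b$. For a $\mathscr{J}$-class $J$, $A(J)=\{a\in M: J_a<_{\mathscr{J}}J\}$, and $\theta_J$ is the relation: $a\,\theta_J\,b$ iff $a=b$, or $a,b\in A(J)$, or $a,b\in J$ and $a\mathscr{H}b$. *)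

theory Defs
  imports Main
begin

text \<open>The finite monoid M is the ambient type 'a :: {monoid_mult, finite}.\<close>

definition left_ideal :: "'a::monoid_mult \<Rightarrow> 'a set" where
  "left_ideal a = {x * a | x. True}"

definition right_ideal :: "'a::monoid_mult \<Rightarrow> 'a set" where
  "right_ideal a = {a * x | x. True}"

definition two_ideal :: "'a::monoid_mult \<Rightarrow> 'a set" where
  "two_ideal a = {x * a * y | x y. True}"

definition H_rel :: "'a::monoid_mult \<Rightarrow> 'a \<Rightarrow> bool" where
  "H_rel a b \<longleftrightarrow> left_ideal a = left_ideal b \<and> right_ideal a = right_ideal b"

definition J_rel :: "'a::monoid_mult \<Rightarrow> 'a \<Rightarrow> bool" where
  "J_rel a b \<longleftrightarrow> two_ideal a = two_ideal b"

definition J_class :: "'a::monoid_mult \<Rightarrow> 'a set" where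
  "J_class a = {b. J_rel a b}"

definition is_J_class :: "'a::monoid_mult set \<Rightarrow> bool" where
  "is_J_class J \<longleftrightarrow> (\<exists>a. J = J_class a)"

definition J_less :: "'a::monoid_mult set \<Rightarrow> 'a set \<Rightarrow> bool" where
  "J_less J1 J2 \<longleftrightarrow> (\<exists>a b. J1 = J_class a \<and> J2 = J_class b \<and>
       two_ideal a \<subseteq> two_ideal b \<and> J1 \<noteq> J2)"

definition A_set :: "'a::monoid_mult set \<Rightarrow> 'a set" where
  "A_set J = {a. J_less (J_class a) J}"

definition theta :: "'a::monoid_mult set \<Rightarrow> ('a \<times> 'a) set" where
  "theta J = {(a, b). a = b \<or> (a \<in> A_set J \<and> b \<in> A_set J) \<or> (a \<in> J \<and> b \<in> J \<and> H_rel a b)}"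

definition congruence :: "('a::monoid_mult \<times> 'a) set \<Rightarrow> bool" where
  "congruence R \<longleftrightarrow> equiv UNIV R \<and>
     (\<forall>a b c. (a, b) \<in> R \<longrightarrow> (c * a, c * b) \<in> R \<and> (a * c, b * c) \<in> R)"

end

theory Submission
  imports Defs
begin

text \<open>
  In a finite monoid, \<open>c a\<close> \<open>\<J>\<close>-equivalent to \<open>a\<close> forces \<open>c a \<L> a\<close>,
  and dually \<open>a c \<J> a\<close> forces \<open>a c \<R> a\<close>; both follow from \<open>a = u a v\<close> by taking
  an idempotent power of \<open>u\<close> (resp. \<open>v\<close>). Hence multiplying an \<open>\<H>\<close>-related pair of \<open>J\<close>
  on either side keeps it \<open>\<H>\<close>-related inside \<open>J\<close> or sends both elements strictly below
  \<open>J\<close>, so each \<open>\<theta>\<^sub>J\<close> is a congruence. A \<open>\<theta>\<^sub>J\<close>-step followed by a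
  \<open>\<theta>\<^sub>J\<^sub>'\<close>-step is again a step of one of them: the shared set \<open>A(J) = A(J')\<close> is
  disjoint from \<open>J\<close> and \<open>J'\<close>, and \<open>J\<close>, \<open>J'\<close> coincide as soon as they meet.
\<close>

lemma left_ideal_subset_iff: "left_ideal a \<subseteq> left_ideal b \<longleftrightarrow> (\<exists>x. a = x * b)"
proof
  assume "left_ideal a \<subseteq> left_ideal b"
  moreover have "a \<in> left_ideal a"
    unfolding left_ideal_def by (metis (mono_tags) mem_Collect_eq mult_1_left)
  ultimately show "\<exists>x. a = x * b" unfolding left_ideal_def by blast
qed (auto simp: left_ideal_def mult.assoc[symmetric])

lemma right_ideal_subset_iff: "right_ideal a \<subseteq> right_ideal b \<longleftrightarrow> (\<exists>x. a = b * x)"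
proof
  assume "right_ideal a \<subseteq> right_ideal b"
  moreover have "a \<in> right_ideal a"
    unfolding right_ideal_def by (metis (mono_tags) mem_Collect_eq mult_1_right)
  ultimately show "\<exists>x. a = b * x" unfolding right_ideal_def by blast
qed (auto simp: right_ideal_def mult.assoc)

lemma two_ideal_subset_iff: "two_ideal a \<subseteq> two_ideal b \<longleftrightarrow> (\<exists>x y. a = x * b * y)"
proof
  assume "two_ideal a \<subseteq> two_ideal b"
  moreover have "a = 1 * a * 1" by simp
  then have "a \<in> two_ideal a" unfolding two_ideal_def by blast
  ultimately show "\<exists>x y. a = x * b * y" unfolding two_ideal_def by blast
next
  assume "\<exists>x y. a = x * b * y"
  then obtain x y where "a = x * b * y" by blast
  then have "u * a * v = (u * x) * b * (y * v)" for u v by (simp add: mult.assoc)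
  then show "two_ideal a \<subseteq> two_ideal b" unfolding two_ideal_def by blast
qed

lemma two_ideal_mult_left_subset: "two_ideal (c * a) \<subseteq> two_ideal a"
  unfolding two_ideal_subset_iff by (metis mult_1_right)

lemma two_ideal_mult_right_subset: "two_ideal (a * c) \<subseteq> two_ideal a"
  unfolding two_ideal_subset_iff by (metis mult_1_left)

lemma two_ideal_eq_if_left_ideal_eq:
  assumes "left_ideal a = left_ideal b"
  shows "two_ideal a = two_ideal b"
proof -
  obtain x y where "a = x * b" "b = y * a"
    using assms left_ideal_subset_iff by (metis order_refl)
  then show ?thesis using two_ideal_mult_left_subset by (metis subset_antisym)
qed

lemma two_ideal_eq_if_right_ideal_eq:
  assumes "right_ideal a = right_ideal b"
  shows "two_ideal a = two_ideal b"
proof -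
  obtain x y where "a = b * x" "b = a * y"
    using assms right_ideal_subset_iff by (metis order_refl)
  then show ?thesis using two_ideal_mult_right_subset by (metis subset_antisym)
qed

lemma left_ideal_eq_mult_right:
  assumes "left_ideal a = left_ideal b"
  shows "left_ideal (a * c) = left_ideal (b * c)"
proof -
  obtain x y where "a = x * b" "b = y * a"
    using assms left_ideal_subset_iff by (metis order_refl)
  then have "a * c = x * (b * c)" "b * c = y * (a * c)" by (metis mult.assoc)+
  then show ?thesis using left_ideal_subset_iff by (metis subset_antisym)
qed

lemma right_ideal_eq_mult_left:
  assumes "right_ideal a = right_ideal b"
  shows "right_ideal (c * a) = right_ideal (c * b)"
proof -
  obtain x y where "a = b * x" "b = a * y"
    using assms right_ideal_subset_iff by (metis order_refl)
  then have "c * a = (c * b) * x" "c * b = (c * a) * y" by (metis mult.assoc)+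
  then show ?thesis using right_ideal_subset_iff by (metis subset_antisym)
qed

lemma power_eventually_periodic:
  fixes s :: "'a::monoid_mult"
  assumes "s ^ i = s ^ (i + d)" and "i \<le> k"
  shows "s ^ (k + m * d) = s ^ k"
proof -
  have "s ^ (i + m * d) = s ^ i"
  proof (induction m)
    case (Suc m)
    have "s ^ (i + Suc m * d) = s ^ (i + m * d) * s ^ d"
      by (simp add: power_add[symmetric] algebra_simps)
    also have "\<dots> = s ^ (i + d)" using Suc by (simp add: power_add)
    finally show ?case using assms(1) by simp
  qed simp
  moreover have "k + m * d = (i + m * d) + (k - i)" "k = i + (k - i)"
    using assms(2) by simp_all
  ultimately show ?thesis by (metis power_add)
qed

lemma idempotent_power_exists:
  fixes s :: "'a::{monoid_mult, finite}"
  obtains n where "n > 0" and "s ^ n * s ^ n = s ^ n"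
proof -
  have "\<not> inj (\<lambda>n::nat. s ^ n)"
    using finite_UNIV infinite_UNIV_nat finite_imageD by (metis finite_subset subset_UNIV)
  then obtain i d where d: "d > 0" "s ^ i = s ^ (i + d)"
    unfolding inj_def by (metis less_imp_add_positive nat_neq_iff)
  define n where "n = d + i * d"
  have n: "n > 0" "i \<le> n"
    using d(1) by (simp_all add: n_def trans_le_add2)
  have "s ^ n * s ^ n = s ^ (n + (i + 1) * d)"
    by (simp add: n_def power_add)
  also have "\<dots> = s ^ n"
    using power_eventually_periodic[OF d(2) n(2)] .
  finally show ?thesis using n that by blast
qed

lemma power_sandwich:
  fixes x :: "'a::monoid_mult"
  assumes "x = u * x * v"
  shows "x = u ^ n * x * v ^ n"
proof (induction n)
  case (Suc n)
  have "x = u ^ n * (u * x * v) * v ^ n" using Suc assms by simp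
  then show ?case by (simp only: power_Suc2[of u] power_Suc[of v] mult.assoc)
qed simp

lemma power_fix_left:
  fixes x :: "'a::{monoid_mult, finite}"
  assumes "x = u * x * v"
  obtains n where "n > 0" and "u ^ n * x = x"
proof -
  note pow = power_sandwich[OF assms]
  obtain n where n: "n > 0" "u ^ n * u ^ n = u ^ n" using idempotent_power_exists .
  have "u ^ n * x = u ^ n * u ^ n * x * v ^ n" using pow[of n] by (metis mult.assoc)
  also have "\<dots> = x" using n(2) pow[of n] by metis
  finally show ?thesis using n(1) that by blast
qed

lemma power_fix_right:
  fixes x :: "'a::{monoid_mult, finite}"
  assumes "x = u * x * v"
  obtains n where "n > 0" and "x * v ^ n = x"
proof -
  note pow = power_sandwich[OF assms]
  obtain n where n: "n > 0" "v ^ n * v ^ n = v ^ n" using idempotent_power_exists .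
  have "x * v ^ n = u ^ n * x * (v ^ n * v ^ n)" using pow[of n] by (metis mult.assoc)
  also have "\<dots> = x" using n(2) pow[of n] by metis
  finally show ?thesis using n(1) that by blast
qed

lemma left_ideal_eq_if_two_ideal_mult_left_eq:
  fixes x y :: "'a::{monoid_mult, finite}"
  assumes "two_ideal (y * x) = two_ideal x"
  shows "left_ideal (y * x) = left_ideal x"
proof -
  obtain p q where "x = p * (y * x) * q"
    using assms two_ideal_subset_iff[of x "y * x"] by auto
  then have "x = (p * y) * x * q" by (simp add: mult.assoc)
  then obtain n where "n > 0" "(p * y) ^ n * x = x" by (rule power_fix_left)
  then obtain m where "(p * y) ^ Suc m * x = x" by (metis gr0_implies_Suc)
  then have "x = ((p * y) ^ m * p) * (y * x)"
    by (metis power_Suc2 mult.assoc)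
  then show ?thesis by (metis left_ideal_subset_iff subset_antisym)
qed

lemma right_ideal_eq_if_two_ideal_mult_right_eq:
  fixes x y :: "'a::{monoid_mult, finite}"
  assumes "two_ideal (x * y) = two_ideal x"
  shows "right_ideal (x * y) = right_ideal x"
proof -
  obtain p q where "x = p * (x * y) * q"
    using assms two_ideal_subset_iff[of x "x * y"] by auto
  then have "x = p * x * (y * q)" by (simp add: mult.assoc)
  then obtain n where "n > 0" "x * (y * q) ^ n = x" by (rule power_fix_right)
  then obtain m where "x * (y * q) ^ Suc m = x" by (metis gr0_implies_Suc)
  then have "x = (x * y) * (q * (y * q) ^ m)"
    by (metis power_Suc mult.assoc)
  then show ?thesis by (metis right_ideal_subset_iff subset_antisym)
qed

lemma H_rel_mult_left:
  fixes a b c :: "'a::{monoid_mult, finite}"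
  assumes "H_rel a b" and "two_ideal (c * a) = two_ideal a"
  shows "H_rel (c * a) (c * b)"
proof -
  have R: "right_ideal (c * a) = right_ideal (c * b)"
    using assms(1) right_ideal_eq_mult_left unfolding H_rel_def by blast
  have "two_ideal (c * b) = two_ideal b"
    using assms two_ideal_eq_if_right_ideal_eq[OF R] two_ideal_eq_if_left_ideal_eq
    unfolding H_rel_def by metis
  then have "left_ideal (c * a) = left_ideal (c * b)"
    using assms left_ideal_eq_if_two_ideal_mult_left_eq unfolding H_rel_def by metis
  with R show ?thesis unfolding H_rel_def by blast
qed

lemma H_rel_mult_right:
  fixes a b c :: "'a::{monoid_mult, finite}"
  assumes "H_rel a b" and "two_ideal (a * c) = two_ideal a"
  shows "H_rel (a * c) (b * c)"
proof -
  have L: "left_ideal (a * c) = left_ideal (b * c)"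
    using assms(1) left_ideal_eq_mult_right unfolding H_rel_def by blast
  have "two_ideal (b * c) = two_ideal b"
    using assms two_ideal_eq_if_left_ideal_eq[OF L] two_ideal_eq_if_right_ideal_eq
    unfolding H_rel_def by metis
  then have "right_ideal (a * c) = right_ideal (b * c)"
    using assms right_ideal_eq_if_two_ideal_mult_right_eq unfolding H_rel_def by metis
  with L show ?thesis unfolding H_rel_def by blast
qed

lemma mem_J_class_iff: "x \<in> J_class j \<longleftrightarrow> two_ideal x = two_ideal j"
  by (auto simp: J_class_def J_rel_def)

lemma J_class_eq_iff: "J_class a = J_class b \<longleftrightarrow> two_ideal a = two_ideal b"
proof
  assume "J_class a = J_class b"
  moreover have "a \<in> J_class a" by (simp add: mem_J_class_iff)
  ultimately show "two_ideal a = two_ideal b" by (simp add: mem_J_class_iff)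
qed (simp add: J_class_def J_rel_def)

lemma A_set_J_class: "A_set (J_class j) = {x. two_ideal x \<subset> two_ideal j}"
  unfolding A_set_def J_less_def J_class_eq_iff by blast

lemma theta_J_class_iff:
  "(a, b) \<in> theta (J_class j) \<longleftrightarrow> a = b \<or>
     (two_ideal a \<subset> two_ideal j \<and> two_ideal b \<subset> two_ideal j) \<or>
     (two_ideal a = two_ideal j \<and> two_ideal b = two_ideal j \<and> H_rel a b)"
  unfolding theta_def A_set_J_class mem_J_class_iff by auto

lemma theta_mult_left:
  fixes a b c :: "'a::{monoid_mult, finite}"
  assumes "is_J_class J" and "(a, b) \<in> theta J"
  shows "(c * a, c * b) \<in> theta J"
proof -
  obtain j where J: "J = J_class j" using assms(1) unfolding is_J_class_def by blast
  have below: "two_ideal (c * x) \<subset> two_ideal j" if "two_ideal x \<subseteq> two_ideal j"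
    and "two_ideal (c * x) \<noteq> two_ideal x" for x
    using that two_ideal_mult_left_subset[of c x] by blast
  consider "a = b" | "two_ideal a \<subset> two_ideal j" "two_ideal b \<subset> two_ideal j"
    | "two_ideal a = two_ideal j" "two_ideal b = two_ideal j" "H_rel a b"
    using assms(2) unfolding J theta_J_class_iff by blast
  then show ?thesis
  proof cases
    case 2
    then show ?thesis unfolding J theta_J_class_iff
      using two_ideal_mult_left_subset by (metis subset_psubset_trans)
  next
    case 3
    then have "two_ideal (c * a) = two_ideal (c * b)"
      using two_ideal_eq_if_right_ideal_eq right_ideal_eq_mult_left unfolding H_rel_def by blast
    then show ?thesis
      unfolding J theta_J_class_iff using 3 H_rel_mult_left below by (metis order_refl)
  qed (simp add: theta_def)
qed

lemma theta_mult_right: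
  fixes a b c :: "'a::{monoid_mult, finite}"
  assumes "is_J_class J" and "(a, b) \<in> theta J"
  shows "(a * c, b * c) \<in> theta J"
proof -
  obtain j where J: "J = J_class j" using assms(1) unfolding is_J_class_def by blast
  have below: "two_ideal (x * c) \<subset> two_ideal j" if "two_ideal x \<subseteq> two_ideal j"
    and "two_ideal (x * c) \<noteq> two_ideal x" for x
    using that two_ideal_mult_right_subset[of x c] by blast
  consider "a = b" | "two_ideal a \<subset> two_ideal j" "two_ideal b \<subset> two_ideal j"
    | "two_ideal a = two_ideal j" "two_ideal b = two_ideal j" "H_rel a b"
    using assms(2) unfolding J theta_J_class_iff by blast
  then show ?thesis
  proof cases
    case 2
    then show ?thesis unfolding J theta_J_class_iff
      using two_ideal_mult_right_subset by (metis subset_psubset_trans)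
  next
    case 3
    then have "two_ideal (a * c) = two_ideal (b * c)"
      using two_ideal_eq_if_left_ideal_eq left_ideal_eq_mult_right unfolding H_rel_def by blast
    then show ?thesis
      unfolding J theta_J_class_iff using 3 H_rel_mult_right below by (metis order_refl)
  qed (simp add: theta_def)
qed

lemma A_set_disjoint_J_class:
  assumes "is_J_class J"
  shows "A_set J \<inter> J = {}"
  using assms unfolding is_J_class_def by (auto simp: A_set_J_class mem_J_class_iff)

lemma J_class_eq_if_common_element:
  assumes "is_J_class J" and "is_J_class J'" and "x \<in> J" and "x \<in> J'"
  shows "J = J'"
  using assms unfolding is_J_class_def by (metis J_class_eq_iff mem_J_class_iff)

lemma theta_relcomp_subset:
  assumes "is_J_class J" and "is_J_class J'" and "A_set J = A_set J'"
  shows "theta J O theta J' \<subseteq> theta J \<union> theta J'"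
proof
  fix p assume "p \<in> theta J O theta J'"
  then obtain x y z where p: "p = (x, z)" and xy: "(x, y) \<in> theta J" and yz: "(y, z) \<in> theta J'"
    by blast
  have H_trans: "H_rel x z" if "H_rel x y" "H_rel y z"
    using that unfolding H_rel_def by simp
  have "y \<notin> A_set J \<inter> J" "y \<notin> A_set J \<inter> J'"
    using A_set_disjoint_J_class assms by blast+
  then show "p \<in> theta J \<union> theta J'"
    using xy yz H_trans J_class_eq_if_common_element[OF assms(1,2), of y]
    unfolding p theta_def assms(3) by auto
qed

lemma congruence_theta:
  fixes J :: "'a::{monoid_mult, finite} set"
  assumes "is_J_class J"
  shows "congruence (theta J)"
proof -
  have "trans (theta J)"
    using theta_relcomp_subset[OF assms assms] by (auto intro: transI)
  moreover have "refl (theta J)" "sym (theta J)"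
    by (auto simp: theta_def H_rel_def intro!: refl_onI symI)
  ultimately show ?thesis
    unfolding congruence_def equiv_def using theta_mult_left theta_mult_right assms by auto
qed

lemma congruence_Un:
  assumes "congruence R" and "congruence S"
    and "R O S \<subseteq> R \<union> S" and "S O R \<subseteq> R \<union> S"
  shows "congruence (R \<union> S)"
proof -
  have "equiv UNIV (R \<union> S)"
  proof (rule equivI)
    show "R \<union> S \<subseteq> UNIV \<times> UNIV" by simp
    show "refl (R \<union> S)" "sym (R \<union> S)"
      using assms(1,2) unfolding congruence_def equiv_def refl_on_def sym_def by blast+
    have "R O R \<subseteq> R" "S O S \<subseteq> S"
      using assms(1,2) unfolding congruence_def equiv_def trans_def by blast+
    then show "trans (R \<union> S)"
      using assms(3,4) unfolding trans_def by blast
  qed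
  then show ?thesis using assms(1,2) unfolding congruence_def by blast
qed

theorem lemma3p5:
  fixes J J' :: "'a::{monoid_mult, finite} set"
  assumes "is_J_class J" and "is_J_class J'"
    and "A_set J = A_set J'"
  shows "congruence (theta J \<union> theta J')"
proof (rule congruence_Un)
  show "congruence (theta J)" "congruence (theta J')"
    using assms(1,2) congruence_theta by blast+
  show "theta J O theta J' \<subseteq> theta J \<union> theta J'"
    using assms by (rule theta_relcomp_subset)
  have "theta J' O theta J \<subseteq> theta J' \<union> theta J"
    using assms(2,1) assms(3)[symmetric] by (rule theta_relcomp_subset)
  then show "theta J' O theta J \<subseteq> theta J \<union> theta J'" by blast
qed

end
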